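(* Let $\Pi=(\iota,\tau,\beta)$ be a safety problem over a vocabulary $\Sigma$, let $w$ be a fresh constant symbol, and let $\varphi(x)$ be a formula over $\Sigma$ with free variable $x$. Then $\varphi(w)$ is a sound prophecy for $\Pi$ if and only if the following safety problem over the vocabulary $\Sigma\cup\{m\}$, where $m$ is a fresh unary relation symbol, is safe: \[\Pi^{\mathrm{sound}}_{\varphi}=\Big(\iota\wedge\forall x.\,\varphi(x)\to m(x),\ \ \tau\wedge\forall x.\,(m(x)\wedge\varphi(x)\wedge\varphi'(x))\to m'(x),\ \ \beta\wedge\forall x.\,\varphi(x)\to\neg m(x)\Big).\]
   Context: A first-order vocabulary $\Sigma$ consists of constant, function and relation symbols; $\Sigma'=\{a' : a\in\Sigma\}$ is a disjoint copy, and for a formula $\varphi$, $\varphi'$ denotes $\varphi$ with every vocabulary symbol replaced by its primed copy. A state is a first-order structure over the vocabulary. A safety problem is a triple $(\iota,\tau,\beta)$, where $\iota$ (initial states) and $\beta$ (bad states) are closed formulas over $\Sigma$ and $\tau$ (transitions) is a closed formula over $\Sigma\uplus\Sigma'$. A pair of states $(s,t)$ over a common domain is a transition if the structure interpreting the unprimed symbols as in $s$ and the primed ones as in $t$ satisfies $\tau$. A trace is a finite sequence of states over a common domain whose consecutive states form transitions; a trace from $\iota$ to $\beta$ is a trace $s_0,\dots,s_k$ with $s_0\models\iota$ and $s_k\models\beta$. The problem is safe if there is no trace from $\iota$ to $\beta$. $\varphi(w)$ denotes $\varphi$ with $x$ replaced by $w$. The safety problem $\Pi^w_\varphi$ over $\Sigma\cup\{w\}$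 is \[\Pi^w_\varphi=\big(\iota\wedge\varphi(w),\ \varphi(w)\wedge\tau\wedge w'=w\wedge(\varphi(w))',\ \beta\wedge\varphi(w)\big).\] $\varphi(w)$ is a sound prophecy for $\Pi$ if for every trace of $\Pi$ from $\iota$ to $\beta$ there exists an interpretation of $w$ such that the resulting sequence of states is a trace of $\Pi^w_\varphi$ from $\iota\wedge\varphi(w)$ to $\beta\wedge\varphi(w)$. *)

theory Defs
  imports Main
begin

datatype 'f trm = Var nat | Fn 'f "'f trm list"

datatype ('f, 'r) fm =
    FFalse
  | Eq "'f trm" "'f trm"
  | Rel 'r "'f trm list"
  | Neg "('f, 'r) fm"
  | Conj "('f, 'r) fm" "('f, 'r) fm"
  | Disj "('f, 'r) fm" "('f, 'r) fm"
  | Imp "('f, 'r) fm" "('f, 'r) fm"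
  | Forall nat "('f, 'r) fm"
  | Exists nat "('f, 'r) fm"

fun fv_trm :: "'f trm \<Rightarrow> nat set" where
  "fv_trm (Var n) = {n}"
| "fv_trm (Fn f ts) = (\<Union>t\<in>set ts. fv_trm t)"

fun fv :: "('f, 'r) fm \<Rightarrow> nat set" where
  "fv FFalse = {}"
| "fv (Eq s t) = fv_trm s \<union> fv_trm t"
| "fv (Rel r ts) = (\<Union>t\<in>set ts. fv_trm t)"
| "fv (Neg p) = fv p"
| "fv (Conj p q) = fv p \<union> fv q"
| "fv (Disj p q) = fv p \<union> fv q"
| "fv (Imp p q) = fv p \<union> fv q"
| "fv (Forall x p) = fv p - {x}"
| "fv (Exists x p) = fv p - {x}"

definition closed :: "('f, 'r) fm \<Rightarrow> bool" where
  "closed p \<longleftrightarrow> fv p = {}"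

text \<open>Substitution of a term for the free occurrences of variable x.
  (Only used with closed terms, so no variable capture can arise.)\<close>
fun subst_trm :: "nat \<Rightarrow> 'f trm \<Rightarrow> 'f trm \<Rightarrow> 'f trm" where
  "subst_trm x u (Var n) = (if n = x then u else Var n)"
| "subst_trm x u (Fn f ts) = Fn f (map (subst_trm x u) ts)"

fun subst :: "nat \<Rightarrow> 'f trm \<Rightarrow> ('f, 'r) fm \<Rightarrow> ('f, 'r) fm" where
  "subst x u FFalse = FFalse"
| "subst x u (Eq s t) = Eq (subst_trm x u s) (subst_trm x u t)"
| "subst x u (Rel r ts) = Rel r (map (subst_trm x u) ts)"
| "subst x u (Neg p) = Neg (subst x u p)"
| "subst x u (Conj p q) = Conj (subst x u p) (subst x u q)"
| "subst x u (Disj p q) = Disj (subst x u p) (subst x u q)"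
| "subst x u (Imp p q) = Imp (subst x u p) (subst x u q)"
| "subst x u (Forall y p) = (if y = x then Forall y p else Forall y (subst x u p))"
| "subst x u (Exists y p) = (if y = x then Exists y p else Exists y (subst x u p))"

text \<open>A structure with universe the type 'a (nonempty by construction): an interpretation
  of every function symbol and every relation symbol.\<close>
type_synonym ('f, 'r, 'a) struc = "('f \<Rightarrow> 'a list \<Rightarrow> 'a) \<times> ('r \<Rightarrow> 'a list \<Rightarrow> bool)"

fun eval_trm :: "('f, 'r, 'a) struc \<Rightarrow> (nat \<Rightarrow> 'a) \<Rightarrow> 'f trm \<Rightarrow> 'a" where
  "eval_trm S e (Var n) = e n"
| "eval_trm S e (Fn f ts) = fst S f (map (eval_trm S e) ts)"

fun eval :: "('f, 'r, 'a) struc \<Rightarrow> (nat \<Rightarrow> 'a) \<Rightarrow> ('f, 'r) fm \<Rightarrow> bool" where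
  "eval S e FFalse = False"
| "eval S e (Eq s t) = (eval_trm S e s = eval_trm S e t)"
| "eval S e (Rel r ts) = snd S r (map (eval_trm S e) ts)"
| "eval S e (Neg p) = (\<not> eval S e p)"
| "eval S e (Conj p q) = (eval S e p \<and> eval S e q)"
| "eval S e (Disj p q) = (eval S e p \<or> eval S e q)"
| "eval S e (Imp p q) = (eval S e p \<longrightarrow> eval S e q)"
| "eval S e (Forall x p) = (\<forall>a. eval S (e(x := a)) p)"
| "eval S e (Exists x p) = (\<exists>a. eval S (e(x := a)) p)"

definition models :: "('f, 'r, 'a) struc \<Rightarrow> ('f, 'r) fm \<Rightarrow> bool" where
  "models S p \<longleftrightarrow> (\<forall>e. eval S e p)"

text \<open>The vocabulary \<Sigma> \<uplus> \<Sigma>': Cur a is the symbol a, Nxt a is its primed copy a'.\<close>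
datatype 'a primed = Cur 'a | Nxt 'a

definition unprimed :: "('f, 'r) fm \<Rightarrow> ('f primed, 'r primed) fm" where
  "unprimed p = map_fm Cur Cur p"

definition prime :: "('f, 'r) fm \<Rightarrow> ('f primed, 'r primed) fm" where
  "prime p = map_fm Nxt Nxt p"

definition pair_struc :: "('f, 'r, 'a) struc \<Rightarrow> ('f, 'r, 'a) struc \<Rightarrow> ('f primed, 'r primed, 'a) struc" where
  "pair_struc s t =
     ((\<lambda>f. case f of Cur g \<Rightarrow> fst s g | Nxt g \<Rightarrow> fst t g),
      (\<lambda>r. case r of Cur q \<Rightarrow> snd s q | Nxt q \<Rightarrow> snd t q))"

type_synonym ('f, 'r) problem = "('f, 'r) fm \<times> ('f primed, 'r primed) fm \<times> ('f, 'r) fm"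

definition init :: "('f, 'r) problem \<Rightarrow> ('f, 'r) fm" where "init P = fst P"
definition trans :: "('f, 'r) problem \<Rightarrow> ('f primed, 'r primed) fm" where "trans P = fst (snd P)"
definition bad :: "('f, 'r) problem \<Rightarrow> ('f, 'r) fm" where "bad P = snd (snd P)"

definition is_problem :: "('f, 'r) problem \<Rightarrow> bool" where
  "is_problem P \<longleftrightarrow> closed (init P) \<and> closed (trans P) \<and> closed (bad P)"

definition is_transition :: "('f, 'r) problem \<Rightarrow> ('f, 'r, 'a) struc \<Rightarrow> ('f, 'r, 'a) struc \<Rightarrow> bool" where
  "is_transition P s t \<longleftrightarrow> models (pair_struc s t) (trans P)"

definition is_trace :: "('f, 'r) problem \<Rightarrow> ('f, 'r, 'a) struc list \<Rightarrow> bool" where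
  "is_trace P ss \<longleftrightarrow> ss \<noteq> [] \<and> (\<forall>i. Suc i < length ss \<longrightarrow> is_transition P (ss ! i) (ss ! Suc i))"

definition trace_init_bad :: "('f, 'r) problem \<Rightarrow> ('f, 'r, 'a) struc list \<Rightarrow> bool" where
  "trace_init_bad P ss \<longleftrightarrow> is_trace P ss \<and> models (hd ss) (init P) \<and> models (last ss) (bad P)"

definition safe_in :: "'a itself \<Rightarrow> ('f, 'r) problem \<Rightarrow> bool" where
  "safe_in _ P \<longleftrightarrow> \<not> (\<exists>ss :: ('f, 'r, 'a) struc list. trace_init_bad P ss)"

text \<open>Vocabulary \<Sigma> \<union> {w}: function symbols 'f option, the fresh constant w being None.\<close>
definition add_w :: "('f, 'r) fm \<Rightarrow> ('f option, 'r) fm" where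
  "add_w p = map_fm Some id p"

definition add_w2 :: "('f primed, 'r primed) fm \<Rightarrow> ('f option primed, 'r primed) fm" where
  "add_w2 p = map_fm (map_primed Some) id p"

definition w_const :: "'f option trm" where "w_const = Fn None []"

definition phi_w :: "nat \<Rightarrow> ('f, 'r) fm \<Rightarrow> ('f option, 'r) fm" where
  "phi_w x \<phi> = subst x w_const (add_w \<phi>)"

definition Pi_w :: "('f, 'r) problem \<Rightarrow> nat \<Rightarrow> ('f, 'r) fm \<Rightarrow> ('f option, 'r) problem" where
  "Pi_w P x \<phi> =
    (Conj (add_w (init P)) (phi_w x \<phi>),
     Conj (unprimed (phi_w x \<phi>))
       (Conj (add_w2 (trans P))
         (Conj (Eq (Fn (Nxt None) []) (Fn (Cur None) [])) (prime (phi_w x \<phi>)))),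
     Conj (add_w (bad P)) (phi_w x \<phi>))"

definition expand_w :: "'a \<Rightarrow> ('f, 'r, 'a) struc \<Rightarrow> ('f option, 'r, 'a) struc" where
  "expand_w c s = ((\<lambda>f. case f of None \<Rightarrow> (\<lambda>_. c) | Some g \<Rightarrow> fst s g), snd s)"

text \<open>\<phi>(w) is a sound prophecy for \<Pi> (traces over the domain 'a): every trace of \<Pi> from \<iota>
  to \<beta>, expanded with a single interpretation of w, is a trace of \<Pi>^w_\<phi> from its initial to
  its bad states.\<close>
definition sound_prophecy_in :: "'a itself \<Rightarrow> ('f, 'r) problem \<Rightarrow> nat \<Rightarrow> ('f, 'r) fm \<Rightarrow> bool" where
  "sound_prophecy_in _ P x \<phi> \<longleftrightarrow>
     (\<forall>ss :: ('f, 'r, 'a) struc list. trace_init_bad P ss \<longrightarrow>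
        (\<exists>c. trace_init_bad (Pi_w P x \<phi>) (map (expand_w c) ss)))"

text \<open>Vocabulary \<Sigma> \<union> {m}: relation symbols 'r option, the fresh unary relation m being None.\<close>
definition add_m :: "('f, 'r) fm \<Rightarrow> ('f, 'r option) fm" where
  "add_m p = map_fm id Some p"

definition add_m2 :: "('f primed, 'r primed) fm \<Rightarrow> ('f primed, 'r option primed) fm" where
  "add_m2 p = map_fm id (map_primed Some) p"

definition Pi_sound :: "('f, 'r) problem \<Rightarrow> nat \<Rightarrow> ('f, 'r) fm \<Rightarrow> ('f, 'r option) problem" where
  "Pi_sound P x \<phi> =
    (Conj (add_m (init P)) (Forall x (Imp (add_m \<phi>) (Rel None [Var x]))),
     Conj (add_m2 (trans P))
       (Forall x (Imp (Conj (Rel (Cur None) [Var x])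
                        (Conj (unprimed (add_m \<phi>)) (prime (add_m \<phi>))))
                  (Rel (Nxt None) [Var x]))),
     Conj (add_m (bad P)) (Forall x (Imp (add_m \<phi>) (Neg (Rel None [Var x])))))"

end

theory Submission
  imports Defs
begin

text \<open>The fresh relation m over-approximates the set of elements that have satisfied \<phi> in
  every state so far: \<iota> forces it to contain \<phi>, \<tau> forces it to retain every element satisfying
  \<phi> before and after the step, and \<beta> demands that it be disjoint from \<phi>. So if some c satisfies
  \<phi> along a whole trace, c stays in m and the bad condition fails; conversely, if no such c
  exists, interpreting m at step i as the set of elements satisfying \<phi> in states 0, ..., i
  turns the trace into a trace of \<Pi>^sound_\<phi>. On the other side, an interpretation c of w
  makes a trace a trace of \<Pi>^w_\<phi> exactly when \<phi>(c) holds throughout.\<close>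

lemma eval_trm_map_trm: "eval_trm S e (map_trm f t) = eval_trm (fst S \<circ> f, R) e t"
  by (induction t) (simp_all cong: map_cong)

lemma eval_map_fm: "eval S e (map_fm f g p) = eval (fst S \<circ> f, snd S \<circ> g) e p"
  by (induction p arbitrary: e) (simp_all add: eval_trm_map_trm[where R = "snd S \<circ> g"] comp_def)

lemma eval_trm_subst_trm_const:
  "eval_trm S e (subst_trm x (Fn h []) t) = eval_trm S (e(x := fst S h [])) t"
  by (induction t) (simp_all cong: map_cong)

lemma eval_subst_const: "eval S e (subst x (Fn h []) p) = eval S (e(x := fst S h [])) p"
  by (induction p arbitrary: e) (auto simp: eval_trm_subst_trm_const comp_def fun_upd_twist)

lemma eval_trm_cong: "(\<And>v. v \<in> fv_trm t \<Longrightarrow> e v = e' v) \<Longrightarrow> eval_trm S e t = eval_trm S e' t"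
proof (induction t)
  case (Fn f ts)
  have "eval_trm S e t = eval_trm S e' t" if "t \<in> set ts" for t
    using that Fn.prems by (intro Fn.IH) auto
  then show ?case by (simp cong: map_cong)
qed simp

lemma eval_cong: "(\<And>v. v \<in> fv p \<Longrightarrow> e v = e' v) \<Longrightarrow> eval S e p = eval S e' p"
proof (induction p arbitrary: e e')
  case (Eq s t)
  then show ?case using eval_trm_cong[of s e e' S] eval_trm_cong[of t e e' S] by simp
next
  case (Rel r ts)
  have "eval_trm S e t = eval_trm S e' t" if "t \<in> set ts" for t
    using that Rel by (intro eval_trm_cong) auto
  then show ?case by (simp cong: map_cong)
next
  case (Neg p)
  have "eval S e p = eval S e' p"
    by (rule Neg.IH) (simp add: Neg.prems)
  then show ?case by simp
next
  case (Conj p q)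
  have "eval S e p = eval S e' p" "eval S e q = eval S e' q"
    by (rule Conj.IH; simp add: Conj.prems)+
  then show ?case by simp
next
  case (Disj p q)
  have "eval S e p = eval S e' p" "eval S e q = eval S e' q"
    by (rule Disj.IH; simp add: Disj.prems)+
  then show ?case by simp
next
  case (Imp p q)
  have "eval S e p = eval S e' p" "eval S e q = eval S e' q"
    by (rule Imp.IH; simp add: Imp.prems)+
  then show ?case by simp
next
  case (Forall y p)
  have "eval S (e(y := a)) p = eval S (e'(y := a)) p" for a
    by (rule Forall.IH) (simp add: Forall.prems)
  then show ?case by simp
next
  case (Exists y p)
  have "eval S (e(y := a)) p = eval S (e'(y := a)) p" for a
    by (rule Exists.IH) (simp add: Exists.prems)
  then show ?case by simp
qed simp

definition holds_at :: "('f, 'r) fm \<Rightarrow> ('f, 'r, 'a) struc \<Rightarrow> 'a \<Rightarrow> bool" where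
  "holds_at \<phi> s a \<longleftrightarrow> eval s (\<lambda>_. a) \<phi>"

lemma eval_upd_single_free_var: "fv \<phi> \<subseteq> {x} \<Longrightarrow> eval s (e(x := a)) \<phi> = holds_at \<phi> s a"
  unfolding holds_at_def by (rule eval_cong) auto

lemma eval_add_w_expand_w: "eval (expand_w c s) e (add_w p) = eval s e p"
  by (simp add: add_w_def eval_map_fm expand_w_def comp_def)

lemma eval_phi_w_expand_w: "eval (expand_w c s) e (phi_w x \<phi>) = eval s (e(x := c)) \<phi>"
  by (simp add: phi_w_def w_const_def eval_subst_const eval_add_w_expand_w) (simp add: expand_w_def)

lemma eval_add_w2_pair_struc_expand_w:
  "eval (pair_struc (expand_w c s) (expand_w c t)) e (add_w2 p) = eval (pair_struc s t) e p"
proof -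
  have "(fst (pair_struc (expand_w c s) (expand_w c t)) \<circ> map_primed Some,
         snd (pair_struc (expand_w c s) (expand_w c t)) \<circ> id) = pair_struc s t"
    by (auto simp: pair_struc_def expand_w_def fun_eq_iff split: primed.split)
  then show ?thesis by (simp add: add_w2_def eval_map_fm)
qed

lemma eval_unprimed_pair_struc: "eval (pair_struc s t) e (unprimed p) = eval s e p"
  by (simp add: unprimed_def eval_map_fm pair_struc_def comp_def)

lemma eval_prime_pair_struc: "eval (pair_struc s t) e (prime p) = eval t e p"
  by (simp add: prime_def eval_map_fm pair_struc_def comp_def)

lemma fst_pair_struc_expand_w_None [simp]:
  "fst (pair_struc (expand_w c s) (expand_w c t)) (Cur None) = (\<lambda>_. c)"
  "fst (pair_struc (expand_w c s) (expand_w c t)) (Nxt None) = (\<lambda>_. c)"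
  by (simp_all add: pair_struc_def expand_w_def fun_eq_iff)

lemma snd_pair_struc [simp]:
  "snd (pair_struc s t) (Cur r) = snd s r"
  "snd (pair_struc s t) (Nxt r) = snd t r"
  by (simp_all add: pair_struc_def)

definition reduct_m :: "('f, 'r option, 'a) struc \<Rightarrow> ('f, 'r, 'a) struc" where
  "reduct_m S = (fst S, \<lambda>r. snd S (Some r))"

definition expand_m :: "('a list \<Rightarrow> bool) \<Rightarrow> ('f, 'r, 'a) struc \<Rightarrow> ('f, 'r option, 'a) struc" where
  "expand_m M s = (fst s, \<lambda>r. case r of None \<Rightarrow> M | Some q \<Rightarrow> snd s q)"

lemma reduct_m_expand_m [simp]: "reduct_m (expand_m M s) = s"
  by (simp add: reduct_m_def expand_m_def)

lemma snd_expand_m_None [simp]: "snd (expand_m M s) None = M"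
  by (simp add: expand_m_def)

lemma eval_add_m: "eval S e (add_m p) = eval (reduct_m S) e p"
  by (simp add: add_m_def eval_map_fm reduct_m_def comp_def)

lemma eval_add_m2: "eval (pair_struc S T) e (add_m2 p) = eval (pair_struc (reduct_m S) (reduct_m T)) e p"
proof -
  have "(fst (pair_struc S T) \<circ> id, snd (pair_struc S T) \<circ> map_primed Some)
          = pair_struc (reduct_m S) (reduct_m T)"
    by (auto simp: pair_struc_def reduct_m_def fun_eq_iff split: primed.split)
  then show ?thesis by (simp add: add_m2_def eval_map_fm)
qed

lemma models_init_Pi_w_expand_w:
  "fv \<phi> \<subseteq> {x} \<Longrightarrow>
    models (expand_w c s) (init (Pi_w P x \<phi>)) \<longleftrightarrow> models s (init P) \<and> holds_at \<phi> s c"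
  by (auto simp: models_def init_def Pi_w_def eval_add_w_expand_w eval_phi_w_expand_w
      eval_upd_single_free_var)

lemma models_bad_Pi_w_expand_w:
  "fv \<phi> \<subseteq> {x} \<Longrightarrow>
    models (expand_w c s) (bad (Pi_w P x \<phi>)) \<longleftrightarrow> models s (bad P) \<and> holds_at \<phi> s c"
  by (auto simp: models_def bad_def Pi_w_def eval_add_w_expand_w eval_phi_w_expand_w
      eval_upd_single_free_var)

lemma is_transition_Pi_w_expand_w:
  "fv \<phi> \<subseteq> {x} \<Longrightarrow>
    is_transition (Pi_w P x \<phi>) (expand_w c s) (expand_w c t)
      \<longleftrightarrow> holds_at \<phi> s c \<and> is_transition P s t \<and> holds_at \<phi> t c"
  by (auto simp: is_transition_def models_def trans_def Pi_w_def eval_add_w_expand_w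
      eval_phi_w_expand_w eval_add_w2_pair_struc_expand_w eval_unprimed_pair_struc
      eval_prime_pair_struc eval_upd_single_free_var)

lemma models_init_Pi_sound:
  "fv \<phi> \<subseteq> {x} \<Longrightarrow>
    models S (init (Pi_sound P x \<phi>)) \<longleftrightarrow>
      models (reduct_m S) (init P) \<and> (\<forall>a. holds_at \<phi> (reduct_m S) a \<longrightarrow> snd S None [a])"
  by (auto simp: models_def init_def Pi_sound_def eval_add_m eval_upd_single_free_var)

lemma models_bad_Pi_sound:
  "fv \<phi> \<subseteq> {x} \<Longrightarrow>
    models S (bad (Pi_sound P x \<phi>)) \<longleftrightarrow>
      models (reduct_m S) (bad P) \<and> (\<forall>a. holds_at \<phi> (reduct_m S) a \<longrightarrow> \<not> snd S None [a])"
  by (auto simp: models_def bad_def Pi_sound_def eval_add_m eval_upd_single_free_var)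

lemma is_transition_Pi_sound:
  "fv \<phi> \<subseteq> {x} \<Longrightarrow>
    is_transition (Pi_sound P x \<phi>) S T \<longleftrightarrow>
      is_transition P (reduct_m S) (reduct_m T) \<and>
      (\<forall>a. snd S None [a] \<and> holds_at \<phi> (reduct_m S) a \<and> holds_at \<phi> (reduct_m T) a
             \<longrightarrow> snd T None [a])"
  by (auto simp: is_transition_def models_def trans_def Pi_sound_def eval_add_m eval_add_m2
      eval_unprimed_pair_struc eval_prime_pair_struc eval_upd_single_free_var)

lemma trace_init_bad_conv_nth:
  "trace_init_bad P ss \<longleftrightarrow>
     ss \<noteq> [] \<and> models (ss ! 0) (init P) \<and>
     (\<forall>i. Suc i < length ss \<longrightarrow> is_transition P (ss ! i) (ss ! Suc i)) \<and>
     models (ss ! (length ss - 1)) (bad P)"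
  by (auto simp: trace_init_bad_def is_trace_def hd_conv_nth last_conv_nth)

lemma trace_init_bad_Pi_w_expand_w_iff:
  assumes "fv \<phi> \<subseteq> {x}"
  shows "trace_init_bad (Pi_w P x \<phi>) (map (expand_w c) ss) \<longleftrightarrow>
           trace_init_bad P ss \<and> (\<forall>s\<in>set ss. holds_at \<phi> s c)"
proof
  assume "trace_init_bad (Pi_w P x \<phi>) (map (expand_w c) ss)"
  then have "ss \<noteq> []" and "models (ss ! 0) (init P)" and "holds_at \<phi> (ss ! 0) c"
    and step: "\<And>i. Suc i < length ss \<Longrightarrow>
      holds_at \<phi> (ss ! i) c \<and> is_transition P (ss ! i) (ss ! Suc i) \<and> holds_at \<phi> (ss ! Suc i) c"
    and "models (ss ! (length ss - 1)) (bad P)"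
    by (auto simp: trace_init_bad_conv_nth models_init_Pi_w_expand_w[OF assms]
        models_bad_Pi_w_expand_w[OF assms] is_transition_Pi_w_expand_w[OF assms])
  moreover have "holds_at \<phi> (ss ! i) c" if "i < length ss" for i
    using that step \<open>holds_at \<phi> (ss ! 0) c\<close> by (cases i) auto
  then have "\<forall>s\<in>set ss. holds_at \<phi> s c"
    by (metis in_set_conv_nth)
  ultimately show "trace_init_bad P ss \<and> (\<forall>s\<in>set ss. holds_at \<phi> s c)"
    by (auto simp: trace_init_bad_conv_nth)
next
  assume "trace_init_bad P ss \<and> (\<forall>s\<in>set ss. holds_at \<phi> s c)"
  then show "trace_init_bad (Pi_w P x \<phi>) (map (expand_w c) ss)"
    by (auto simp: trace_init_bad_conv_nth models_init_Pi_w_expand_w[OF assms]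
        models_bad_Pi_w_expand_w[OF assms] is_transition_Pi_w_expand_w[OF assms])
qed

lemma sound_prophecy_in_iff_witness:
  assumes "fv \<phi> \<subseteq> {x}"
  shows "sound_prophecy_in TYPE('a) P x \<phi> \<longleftrightarrow>
    (\<forall>ss :: ('f, 'r, 'a) struc list. trace_init_bad P ss \<longrightarrow> (\<exists>c. \<forall>s\<in>set ss. holds_at \<phi> s c))"
  by (simp add: sound_prophecy_in_def trace_init_bad_Pi_w_expand_w_iff[OF assms])

lemma trace_init_bad_Pi_sound_reduct_m:
  assumes "fv \<phi> \<subseteq> {x}" and "trace_init_bad (Pi_sound P x \<phi>) SS"
  shows "trace_init_bad P (map reduct_m SS)"
  using assms(2) by (auto simp: trace_init_bad_conv_nth models_init_Pi_sound[OF assms(1)]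
      models_bad_Pi_sound[OF assms(1)] is_transition_Pi_sound[OF assms(1)])

lemma Pi_sound_trace_keeps_witness_in_m:
  assumes "fv \<phi> \<subseteq> {x}" and trace: "trace_init_bad (Pi_sound P x \<phi>) SS"
    and witness: "\<forall>S\<in>set SS. holds_at \<phi> (reduct_m S) c"
    and "i < length SS"
  shows "snd (SS ! i) None [c]"
  using \<open>i < length SS\<close>
proof (induction i)
  case 0
  then show ?case
    using trace witness by (auto simp: trace_init_bad_conv_nth models_init_Pi_sound[OF assms(1)])
next
  case (Suc i)
  then show ?case
    using trace witness by (auto simp: trace_init_bad_conv_nth is_transition_Pi_sound[OF assms(1)])
qed

definition history_expansion ::
    "('f, 'r) fm \<Rightarrow> ('f, 'r, 'a) struc list \<Rightarrow> ('f, 'r option, 'a) struc list" where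
  "history_expansion \<phi> ss =
     map (\<lambda>i. expand_m (\<lambda>as. \<forall>j\<le>i. holds_at \<phi> (ss ! j) (hd as)) (ss ! i)) [0..<length ss]"

lemma trace_init_bad_Pi_sound_history_expansion:
  assumes "fv \<phi> \<subseteq> {x}" and trace: "trace_init_bad P ss"
    and no_witness: "\<forall>c. \<exists>s\<in>set ss. \<not> holds_at \<phi> s c"
  shows "trace_init_bad (Pi_sound P x \<phi>) (history_expansion \<phi> ss)"
proof -
  have "\<exists>j\<le>length ss - 1. \<not> holds_at \<phi> (ss ! j) c" for c
  proof -
    obtain j where "j < length ss" "\<not> holds_at \<phi> (ss ! j) c"
      using no_witness by (metis in_set_conv_nth)
    then show ?thesis by (intro exI[of _ j]) auto
  qed
  then show ?thesis
    using trace by (auto simp: trace_init_bad_conv_nth history_expansion_def le_Suc_eq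
        models_init_Pi_sound[OF assms(1)] models_bad_Pi_sound[OF assms(1)]
        is_transition_Pi_sound[OF assms(1)])
qed

lemma safe_in_Pi_sound_iff_witness:
  assumes "fv \<phi> \<subseteq> {x}"
  shows "safe_in TYPE('a) (Pi_sound P x \<phi>) \<longleftrightarrow>
    (\<forall>ss :: ('f, 'r, 'a) struc list. trace_init_bad P ss \<longrightarrow> (\<exists>c. \<forall>s\<in>set ss. holds_at \<phi> s c))"
proof
  assume safe: "safe_in TYPE('a) (Pi_sound P x \<phi>)"
  show "\<forall>ss :: ('f, 'r, 'a) struc list. trace_init_bad P ss \<longrightarrow> (\<exists>c. \<forall>s\<in>set ss. holds_at \<phi> s c)"
    using safe trace_init_bad_Pi_sound_history_expansion[OF assms]
    unfolding safe_in_def by blast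
next
  assume witnesses: "\<forall>ss :: ('f, 'r, 'a) struc list.
    trace_init_bad P ss \<longrightarrow> (\<exists>c. \<forall>s\<in>set ss. holds_at \<phi> s c)"
  show "safe_in TYPE('a) (Pi_sound P x \<phi>)"
    unfolding safe_in_def
  proof
    assume "\<exists>SS :: ('f, 'r option, 'a) struc list. trace_init_bad (Pi_sound P x \<phi>) SS"
    then obtain SS :: "('f, 'r option, 'a) struc list"
      where trace: "trace_init_bad (Pi_sound P x \<phi>) SS" by blast
    then obtain c where witness: "\<forall>S\<in>set SS. holds_at \<phi> (reduct_m S) c"
      using witnesses trace_init_bad_Pi_sound_reduct_m[OF assms] by fastforce
    have last_in_m: "snd (SS ! (length SS - 1)) None [c]"
      using trace by (intro Pi_sound_trace_keeps_witness_in_m[OF assms trace witness])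
        (simp add: trace_init_bad_conv_nth)
    show False
      using trace witness last_in_m
      by (auto simp: trace_init_bad_conv_nth models_bad_Pi_sound[OF assms])
  qed
qed

theorem theorem5p2:
  fixes P :: "('f, 'r) problem" and x :: nat and \<phi> :: "('f, 'r) fm"
  assumes "is_problem P"
    and "fv \<phi> \<subseteq> {x}"
  shows "sound_prophecy_in TYPE('a) P x \<phi> \<longleftrightarrow> safe_in TYPE('a) (Pi_sound P x \<phi>)"
  by (simp only: sound_prophecy_in_iff_witness[OF assms(2)] safe_in_Pi_sound_iff_witness[OF assms(2)])

end
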